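(* Suppose $c\ge2\tau^2$. For every $t\ge0$, let $s(t)$ be the largest multiple of $\tau$ with $s(t)\le t$. Then the FedSPS iterates satisfy (pathwise) $$R_t:=\frac1n\sum_{i=1}^n\|\bar x_t-x_t^i\|^2\le\frac1{2n\tau}\sum_{i=1}^n\sum_{j=s(t)}^{t-1}\gamma_j^i\big[F_i(x_j^i,\xi_j^i)-\ell_i^\star\big]$$ (the sum over $j$ being empty, and $R_t=0$, when $t=s(t)$).
   Context: For each $i\in[n]$, $\mathcal D_i$ is a probability distribution on $\Omega_i$, $F_i:\mathbb R^d\times\Omega_i\to\mathbb R$ with $F_i(\cdot,\xi)$ differentiable for $\xi\in\operatorname{supp}(\mathcal D_i)$; $F_i^\star:=\inf_{\xi\in\operatorname{supp}(\mathcal D_i),x}F_i(x,\xi)$ and $\ell_i^\star\le F_i^\star$ are given reals. FedSPS with parameters $c,\gamma_b>0$ and communication period integer $\tau\ge1$: $x_0^i=x_0$; at each $t$, client $i$ draws $\xi_t^i\sim\mathcal D_i$, sets $g_t^i:=\nabla F_i(x_t^i,\xi_t^i)$, $\gamma_t^i:=\min\{\frac{F_i(x_t^i,\xi_t^i)-\ell_i^\star}{c\|g_t^i\|^2},\gamma_b\}$ (first term $+\infty$ if $g_t^i=0$); if $t+1$ is a multiple of $\tau$, $x_{t+1}^i:=\frac1n\sum_j(x_t^j-\gamma_t^jg_t^j)$ for all $i$, else $x_{t+1}^i:=x_t^i-\gamma_t^ig_t^i$. $\bar x_t:=\frac1n\sum_ix_t^i$. *)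

theory Defs
  imports "HOL-Analysis.Analysis"
begin

definition grad :: "('a::euclidean_space \<Rightarrow> real) \<Rightarrow> 'a \<Rightarrow> 'a" where
  "grad f x = (THE g. (f has_derivative (\<lambda>h. g \<bullet> h)) (at x))"

text \<open>Stochastic Polyak step size: min{(f x - l)/(c ||g||^2), gb}, first term +infinity if g = 0.\<close>
definition sps_step :: "real \<Rightarrow> real \<Rightarrow> real \<Rightarrow> ('a::euclidean_space \<Rightarrow> real) \<Rightarrow> 'a \<Rightarrow> real" where
  "sps_step c gb l f x =
     (if grad f x = 0 then gb else min ((f x - l) / (c * (norm (grad f x))\<^sup>2)) gb)"

text \<open>FedSPS iterates x_t^i = fedsps n tau c gb l F xi x0 t i, for clients i < n.
  F i x w = F_i(x, w); l i = ell_i^*; xi t i = sample drawn by client i at time t.\<close>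
primrec fedsps :: "nat \<Rightarrow> nat \<Rightarrow> real \<Rightarrow> real \<Rightarrow> (nat \<Rightarrow> real)
    \<Rightarrow> (nat \<Rightarrow> 'a::euclidean_space \<Rightarrow> 'w \<Rightarrow> real) \<Rightarrow> (nat \<Rightarrow> nat \<Rightarrow> 'w) \<Rightarrow> 'a \<Rightarrow> nat \<Rightarrow> nat \<Rightarrow> 'a" where
  "fedsps n tau c gb l F xi x0 0 = (\<lambda>i. x0)"
| "fedsps n tau c gb l F xi x0 (Suc t) =
     (let x = fedsps n tau c gb l F xi x0 t;
          loc = (\<lambda>j. x j - sps_step c gb (l j) (\<lambda>y. F j y (xi t j)) (x j)
                         *\<^sub>R grad (\<lambda>y. F j y (xi t j)) (x j))
      in if Suc t mod tau = 0 then (\<lambda>i. (1 / real n) *\<^sub>R (\<Sum>j<n. loc j)) else loc)"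

definition fedsps_gamma :: "nat \<Rightarrow> nat \<Rightarrow> real \<Rightarrow> real \<Rightarrow> (nat \<Rightarrow> real)
    \<Rightarrow> (nat \<Rightarrow> 'a::euclidean_space \<Rightarrow> 'w \<Rightarrow> real) \<Rightarrow> (nat \<Rightarrow> nat \<Rightarrow> 'w) \<Rightarrow> 'a \<Rightarrow> nat \<Rightarrow> nat \<Rightarrow> real" where
  "fedsps_gamma n tau c gb l F xi x0 t i =
     sps_step c gb (l i) (\<lambda>y. F i y (xi t i)) (fedsps n tau c gb l F xi x0 t i)"

definition fedsps_avg :: "nat \<Rightarrow> nat \<Rightarrow> real \<Rightarrow> real \<Rightarrow> (nat \<Rightarrow> real)
    \<Rightarrow> (nat \<Rightarrow> 'a::euclidean_space \<Rightarrow> 'w \<Rightarrow> real) \<Rightarrow> (nat \<Rightarrow> nat \<Rightarrow> 'w) \<Rightarrow> 'a \<Rightarrow> nat \<Rightarrow> 'a" where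
  "fedsps_avg n tau c gb l F xi x0 t = (1 / real n) *\<^sub>R (\<Sum>i<n. fedsps n tau c gb l F xi x0 t i)"

end

theory Submission
  imports Defs
begin

text \<open>Within a communication round every client starts from the same synchronized point and makes
  at most \<open>\<tau>\<close> local steps. The spread around the average is at most the spread around that common
  point, which by Cauchy--Schwarz is at most \<open>\<tau>\<close> times the sum of the squared step lengths; the
  Polyak step size bounds each squared step \<open>\<parallel>\<gamma> g\<parallel>\<^sup>2\<close> by \<open>\<gamma> (F - \<ell>\<^sup>\<star>) / c\<close>, and \<open>c \<ge> 2 \<tau>\<^sup>2\<close>
  turns \<open>\<tau> / c\<close> into \<open>1 / (2 \<tau>)\<close>.\<close>

lemma norm_sum_squared_le_card_mult:
  fixes w :: "'i \<Rightarrow> 'a::real_normed_vector"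
  shows "(norm (sum w A))\<^sup>2 \<le> real (card A) * (\<Sum>j\<in>A. (norm (w j))\<^sup>2)"
proof -
  have "(norm (sum w A))\<^sup>2 \<le> (\<Sum>j\<in>A. norm (w j))\<^sup>2"
    by (simp add: norm_sum power_mono)
  also have "\<dots> \<le> (\<Sum>j\<in>A. (norm (w j))\<^sup>2) * real (card A)"
    by (rule sum_squared_le_sum_of_squares)
  finally show ?thesis by (simp add: mult.commute)
qed

lemma sum_norm_diff_mean_squared_le:
  fixes x :: "nat \<Rightarrow> 'a::real_inner"
  assumes "n \<ge> 1"
  shows "(\<Sum>i<n. (norm ((1 / real n) *\<^sub>R (\<Sum>k<n. x k) - x i))\<^sup>2) \<le> (\<Sum>i<n. (norm (x i - z))\<^sup>2)"
proof -
  define v where "v i = x i - z" for i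
  define m where "m = (1 / real n) *\<^sub>R (\<Sum>k<n. v k)"
  have sum_v: "(\<Sum>k<n. v k) = real n *\<^sub>R m"
    using assms by (simp add: m_def)
  have mean_diff: "(1 / real n) *\<^sub>R (\<Sum>k<n. x k) - x i = m - v i" for i
    using assms by (simp add: m_def v_def sum_subtractf scaleR_diff_right sum_constant_scaleR algebra_simps)
  have "(\<Sum>i<n. (norm (m - v i))\<^sup>2) = (\<Sum>i<n. (norm (v i))\<^sup>2 - 2 * (v i \<bullet> m) + (norm m)\<^sup>2)"
    by (rule sum.cong) (auto simp: power2_norm_eq_inner inner_diff_left inner_diff_right inner_commute)
  also have "\<dots> = (\<Sum>i<n. (norm (v i))\<^sup>2) - 2 * ((\<Sum>i<n. v i) \<bullet> m) + real n * (norm m)\<^sup>2"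
    by (simp add: sum.distrib sum_subtractf sum_distrib_left inner_sum_left)
  also have "\<dots> = (\<Sum>i<n. (norm (v i))\<^sup>2) - real n * (norm m)\<^sup>2"
    by (simp add: sum_v power2_norm_eq_inner)
  also have "\<dots> \<le> (\<Sum>i<n. (norm (v i))\<^sup>2)"
    by simp
  finally show ?thesis by (simp add: mean_diff v_def)
qed

lemma sps_step_nonneg:
  assumes "l \<le> f x" "c > 0" "gb > 0"
  shows "sps_step c gb l f x \<ge> 0"
  using assms by (auto simp: sps_step_def)

lemma norm_sps_update_squared_le:
  assumes "l \<le> f x" "c > 0" "gb > 0"
  shows "(norm (sps_step c gb l f x *\<^sub>R grad f x))\<^sup>2 \<le> sps_step c gb l f x * (f x - l) / c"
proof -
  have g0: "sps_step c gb l f x \<ge> 0"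
    using assms by (rule sps_step_nonneg)
  show ?thesis
  proof (cases "grad f x = 0")
    case True
    then show ?thesis using assms g0 by simp
  next
    case False
    define g where "g = sps_step c gb l f x"
    define q where "q = (norm (grad f x))\<^sup>2"
    have "q > 0" using False by (simp add: q_def)
    have "g \<le> (f x - l) / (c * q)"
      using False by (simp add: g_def q_def sps_step_def)
    hence "g * q \<le> (f x - l) / c"
      using \<open>q > 0\<close> assms by (simp add: field_simps)
    hence "g * (g * q) \<le> g * ((f x - l) / c)"
      using g0 unfolding g_def by (rule mult_left_mono)
    then show ?thesis
      by (simp add: g_def[symmetric] q_def power_mult_distrib power2_eq_square algebra_simps)
  qed
qed

lemma not_dvd_inside_period:
  fixes s m tau :: nat
  assumes "tau dvd s" "s < m" "m < s + tau"
  shows "\<not> tau dvd m"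
proof
  assume "tau dvd m"
  then have "tau dvd m - s" using assms(1) by (rule dvd_diff_nat)
  moreover have "0 < m - s" "m - s < tau" using assms(2,3) by auto
  ultimately show False using nat_dvd_not_less by blast
qed

locale fedsps_run =
  fixes n tau :: nat and c gb :: real and l :: "nat \<Rightarrow> real"
    and F :: "nat \<Rightarrow> 'a::euclidean_space \<Rightarrow> 'w \<Rightarrow> real"
    and xi :: "nat \<Rightarrow> nat \<Rightarrow> 'w" and x0 :: 'a
begin

abbreviation X where "X \<equiv> fedsps n tau c gb l F xi x0"
abbreviation \<gamma> where "\<gamma> \<equiv> fedsps_gamma n tau c gb l F xi x0"
abbreviation stoch_grad where "stoch_grad j i \<equiv> grad (\<lambda>y. F i y (xi j i)) (X j i)"

lemma fedsps_local_step:
  assumes "\<not> tau dvd Suc t"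
  shows "X (Suc t) i = X t i - \<gamma> t i *\<^sub>R stoch_grad t i"
  using assms by (simp add: fedsps_gamma_def Let_def dvd_eq_mod_eq_0)

lemma fedsps_synchronized:
  assumes "tau dvd t"
  shows "X t i = X t j"
proof (cases t)
  case (Suc t')
  with assms show ?thesis by (simp add: Let_def dvd_eq_mod_eq_0)
qed simp

lemma fedsps_round:
  assumes "tau dvd s" "s \<le> t" "t < s + tau"
  shows "X t i = X s i - (\<Sum>j\<in>{s..<t}. \<gamma> j i *\<^sub>R stoch_grad j i)"
  using assms(2,3)
proof (induction t rule: dec_induct)
  case (step t)
  have "\<not> tau dvd Suc t"
    using not_dvd_inside_period[OF assms(1)] step.hyps step.prems by simp
  have "X s i - (\<Sum>j\<in>{s..<Suc t}. \<gamma> j i *\<^sub>R stoch_grad j i)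
        = (X s i - (\<Sum>j\<in>{s..<t}. \<gamma> j i *\<^sub>R stoch_grad j i)) - \<gamma> t i *\<^sub>R stoch_grad t i"
    using step.hyps by (simp add: algebra_simps)
  also have "X s i - (\<Sum>j\<in>{s..<t}. \<gamma> j i *\<^sub>R stoch_grad j i) = X t i"
    using step by simp
  also have "X t i - \<gamma> t i *\<^sub>R stoch_grad t i = X (Suc t) i"
    using \<open>\<not> tau dvd Suc t\<close> by (rule fedsps_local_step[symmetric])
  finally show ?case by (rule sym)
qed simp

lemma fedsps_round_drift_le:
  assumes round: "tau dvd s" "s \<le> t" "t < s + tau"
    and "c \<ge> 2 * (real tau)\<^sup>2" "c > 0" "gb > 0"
    and lower: "\<And>j. l i \<le> F i (X j i) (xi j i)"
  shows "(norm (X t i - X s i))\<^sup>2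
         \<le> (\<Sum>j\<in>{s..<t}. \<gamma> j i * (F i (X j i) (xi j i) - l i)) / (2 * real tau)"
proof -
  define P where "P j = \<gamma> j i * (F i (X j i) (xi j i) - l i)" for j
  have step_le: "(norm (\<gamma> j i *\<^sub>R stoch_grad j i))\<^sup>2 \<le> P j / c" for j
    using norm_sps_update_squared_le[of "l i" "\<lambda>y. F i y (xi j i)" "X j i" c gb] lower \<open>c > 0\<close> \<open>gb > 0\<close>
    by (simp add: P_def fedsps_gamma_def)
  have P_nonneg: "P j \<ge> 0" for j
    using sps_step_nonneg[of "l i" "\<lambda>y. F i y (xi j i)" "X j i" c gb] lower \<open>c > 0\<close> \<open>gb > 0\<close>
    by (simp add: P_def fedsps_gamma_def)
  have tau_pos: "tau > 0" using round by simp
  have "(norm (X t i - X s i))\<^sup>2 = (norm (\<Sum>j\<in>{s..<t}. \<gamma> j i *\<^sub>R stoch_grad j i))\<^sup>2"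
    by (simp add: fedsps_round[OF round])
  also have "\<dots> \<le> real (card {s..<t}) * (\<Sum>j\<in>{s..<t}. (norm (\<gamma> j i *\<^sub>R stoch_grad j i))\<^sup>2)"
    by (rule norm_sum_squared_le_card_mult)
  also have "\<dots> \<le> real tau * (\<Sum>j\<in>{s..<t}. P j / c)"
    using round(3) by (intro mult_mono sum_mono step_le sum_nonneg) auto
  also have "\<dots> = real tau * (\<Sum>j\<in>{s..<t}. P j) / c"
    by (simp add: sum_divide_distrib[symmetric])
  also have "\<dots> \<le> real tau * (\<Sum>j\<in>{s..<t}. P j) / (2 * (real tau)\<^sup>2)"
    using assms(4,5) tau_pos P_nonneg by (intro divide_left_mono sum_nonneg mult_nonneg_nonneg) auto
  also have "\<dots> = (\<Sum>j\<in>{s..<t}. P j) / (2 * real tau)"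
    using tau_pos by (simp add: power2_eq_square)
  finally show ?thesis by (simp add: P_def)
qed

end

theorem mainTheorem9:
  fixes n tau :: nat and c gb :: real and l :: "nat \<Rightarrow> real"
    and F :: "nat \<Rightarrow> 'a::euclidean_space \<Rightarrow> 'w \<Rightarrow> real"
    and supp :: "nat \<Rightarrow> 'w set"
    and xi :: "nat \<Rightarrow> nat \<Rightarrow> 'w" and x0 :: 'a and t :: nat
  assumes n_pos: "n \<ge> 1"
    and tau_pos: "tau \<ge> 1"
    and c_pos: "c > 0" and gb_pos: "gb > 0"
    and c_ge: "c \<ge> 2 * (real tau)\<^sup>2"
    and diff: "\<And>i w x. i < n \<Longrightarrow> w \<in> supp i \<Longrightarrow> (\<lambda>y. F i y w) differentiable (at x)"
    and lower: "\<And>i w x. i < n \<Longrightarrow> w \<in> supp i \<Longrightarrow> l i \<le> F i x w"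
    and samples: "\<And>s i. i < n \<Longrightarrow> xi s i \<in> supp i"
  shows "(1 / real n) * (\<Sum>i<n. (norm (fedsps_avg n tau c gb l F xi x0 t
                                     - fedsps n tau c gb l F xi x0 t i))\<^sup>2)
         \<le> (1 / (2 * real n * real tau)) *
           (\<Sum>i<n. \<Sum>j\<in>{(t div tau) * tau..<t}.
              fedsps_gamma n tau c gb l F xi x0 j i
                * (F i (fedsps n tau c gb l F xi x0 j i) (xi j i) - l i))"
proof -
  interpret fedsps_run n tau c gb l F xi x0 .
  define P where "P j i = \<gamma> j i * (F i (X j i) (xi j i) - l i)" for j i
  define s where "s = (t div tau) * tau"
  have "t = s + t mod tau" "t mod tau < tau"
    using tau_pos by (simp_all add: s_def)
  then have round: "tau dvd s" "s \<le> t" "t < s + tau"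
    by (simp add: s_def, linarith, linarith)
  have l_le: "l i \<le> F i (X j i) (xi j i)" if "i < n" for i j
    using lower samples that by blast
  have "(\<Sum>i<n. (norm (fedsps_avg n tau c gb l F xi x0 t - X t i))\<^sup>2)
        \<le> (\<Sum>i<n. (norm (X t i - X s 0))\<^sup>2)"
    using sum_norm_diff_mean_squared_le[OF n_pos] by (simp add: fedsps_avg_def)
  also have "\<dots> = (\<Sum>i<n. (norm (X t i - X s i))\<^sup>2)"
    using fedsps_synchronized[OF round(1)] by metis
  also have "\<dots> \<le> (\<Sum>i<n. (\<Sum>j\<in>{s..<t}. P j i) / (2 * real tau))"
    using fedsps_round_drift_le[OF round c_ge c_pos gb_pos l_le] by (intro sum_mono) (auto simp: P_def)
  also have "\<dots> = (\<Sum>i<n. \<Sum>j\<in>{s..<t}. P j i) / (2 * real tau)"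
    by (simp add: sum_divide_distrib)
  finally have "(1 / real n) * (\<Sum>i<n. (norm (fedsps_avg n tau c gb l F xi x0 t - X t i))\<^sup>2)
      \<le> (1 / real n) * ((\<Sum>i<n. \<Sum>j\<in>{s..<t}. P j i) / (2 * real tau))"
    by (rule mult_left_mono) simp
  then show ?thesis by (simp add: s_def P_def)
qed

end
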